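(* For every $n\ge1$, \[ \inf_{\boldsymbol x\in S^n}C(\boldsymbol x)\ge\frac{\Lambda^2}{2\big(2n+2\operatorname{card}(E_{II})+\operatorname{card}(E_{IL})\big)}, \] where $\Lambda=\lambda(S)$.
   Context: Network: $(V,E)$ is a finite connected graph with at least one edge and no vertex of degree $2$; each edge $e$ has a length $\lambda(e)>0$. $S$ is the metric measure space obtained by identifying each edge with a segment of length $\lambda(e)$, with length measure $\lambda$ and shortest-path distance $d$. $V_I$ is the set of vertices of degree $\ge3$ and $V_L$ the set of vertices of degree $1$. $E_{II}$ is the set of edges with both endpoints in $V_I$, and $E_{IL}$ the set of edges with one endpoint in $V_I$ and the other in $V_L$. For $\boldsymbol x=(x_1,\dots,x_n)\in S^n$, the social cost is \[ C(\boldsymbol x)=\int_S\min_i d(x_i,y)\,d\lambda(y). \] *)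

theory Defs
  imports "HOL-Analysis.Analysis"
begin

text \<open>Points of the metric graph S: vertices, or interior points
  of an edge e at coordinate t (0 < t < lam e), measured from the smaller endpoint.\<close>

datatype 'v point = Vtx 'v | Inner "'v set" real

definition network :: "'v set \<Rightarrow> 'v set set \<Rightarrow> ('v set \<Rightarrow> real) \<Rightarrow> bool" where
  "network V E lam \<longleftrightarrow> finite V \<and> E \<noteq> {} \<and>
     (\<forall>e\<in>E. e \<subseteq> V \<and> card e = 2 \<and> lam e > 0) \<and>
     (\<forall>u\<in>V. \<forall>v\<in>V. (\<lambda>a b. {a, b} \<in> E)\<^sup>*\<^sup>* u v) \<and>
     (\<forall>v\<in>V. card {e\<in>E. v \<in> e} \<noteq> 2)"

definition degree :: "'v set set \<Rightarrow> 'v \<Rightarrow> nat" where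
  "degree E v = card {e\<in>E. v \<in> e}"

definition V_I :: "'v set \<Rightarrow> 'v set set \<Rightarrow> 'v set" where
  "V_I V E = {v\<in>V. degree E v \<ge> 3}"

definition V_L :: "'v set \<Rightarrow> 'v set set \<Rightarrow> 'v set" where
  "V_L V E = {v\<in>V. degree E v = 1}"

definition E_II :: "'v set \<Rightarrow> 'v set set \<Rightarrow> 'v set set" where
  "E_II V E = {e\<in>E. e \<subseteq> V_I V E}"

definition E_IL :: "'v set \<Rightarrow> 'v set set \<Rightarrow> 'v set set" where
  "E_IL V E = {e\<in>E. e \<inter> V_I V E \<noteq> {} \<and> e \<inter> V_L V E \<noteq> {}}"

definition pt :: "('v::linorder set \<Rightarrow> real) \<Rightarrow> 'v set \<Rightarrow> real \<Rightarrow> 'v point" where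
  "pt lam e t = (if t = 0 then Vtx (Min e) else if t = lam e then Vtx (Max e) else Inner e t)"

definition Spts :: "'v::linorder set \<Rightarrow> 'v set set \<Rightarrow> ('v set \<Rightarrow> real) \<Rightarrow> 'v point set" where
  "Spts V E lam = Vtx ` V \<union> {Inner e t | e t. e \<in> E \<and> 0 < t \<and> t < lam e}"

text \<open>A path in S: a nonempty list of segments (e, s, t), each traversing edge e
  from coordinate s to coordinate t, consecutive segments glued at common points.\<close>
definition is_path :: "'v::linorder set set \<Rightarrow> ('v set \<Rightarrow> real) \<Rightarrow> 'v point \<Rightarrow> 'v point
     \<Rightarrow> ('v set \<times> real \<times> real) list \<Rightarrow> bool" where
  "is_path E lam x y w \<longleftrightarrow> w \<noteq> [] \<and>
     (\<forall>(e, s, t)\<in>set w. e \<in> E \<and> 0 \<le> s \<and> s \<le> lam e \<and> 0 \<le> t \<and> t \<le> lam e) \<and>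
     (\<forall>i. Suc i < length w \<longrightarrow>
        pt lam (fst (w ! i)) (snd (snd (w ! i))) = pt lam (fst (w ! Suc i)) (fst (snd (w ! Suc i)))) \<and>
     pt lam (fst (hd w)) (fst (snd (hd w))) = x \<and>
     pt lam (fst (last w)) (snd (snd (last w))) = y"

definition path_len :: "('v set \<times> real \<times> real) list \<Rightarrow> real" where
  "path_len w = (\<Sum>(e, s, t)\<leftarrow>w. \<bar>t - s\<bar>)"

definition dist_S :: "'v::linorder set set \<Rightarrow> ('v set \<Rightarrow> real) \<Rightarrow> 'v point \<Rightarrow> 'v point \<Rightarrow> real" where
  "dist_S E lam x y = Inf {path_len w | w. is_path E lam x y w}"

definition integral_S :: "'v::linorder set set \<Rightarrow> ('v set \<Rightarrow> real) \<Rightarrow> ('v point \<Rightarrow> real) \<Rightarrow> real" where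
  "integral_S E lam f = (\<Sum>e\<in>E. integral {0..lam e} (\<lambda>t. f (pt lam e t)))"

definition social_cost :: "'v::linorder set set \<Rightarrow> ('v set \<Rightarrow> real) \<Rightarrow> nat \<Rightarrow> (nat \<Rightarrow> 'v point) \<Rightarrow> real" where
  "social_cost E lam n x = integral_S E lam (\<lambda>y. Min ((\<lambda>i. dist_S E lam (x i) y) ` {..<n}))"

definition total_length :: "'v set set \<Rightarrow> ('v set \<Rightarrow> real) \<Rightarrow> real" where
  "total_length E lam = (\<Sum>e\<in>E. lam e)"

end

theory Submission
  imports Defs
begin

text \<open>Fix a profile \<open>x\<close> and a height \<open>mu \<ge> 0\<close>. On each edge \<open>e\<close> take as anchors the
  coordinates of the facilities on \<open>e\<close> together with the endpoints of \<open>e\<close> that are not leaves,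
  and let \<open>g\<^sub>e = min(mu, distance to the anchors)\<close>. Extended by zero off \<open>e\<close>, \<open>g\<^sub>e\<close> is
  1-Lipschitz along every path of \<open>S\<close> (it vanishes at the non-leaf endpoints) and vanishes at every
  facility, so it bounds the distance to the nearest facility from below on \<open>e\<close>. Each anchor cuts
  a tent of area at most \<open>mu\<^sup>2\<close> (\<open>mu\<^sup>2/2\<close> at an endpoint) from \<open>mu \<lambda>(e)\<close>, and charging facilities
  and non-leaf endpoints to edges bounds the total number of anchors, weighted this way, by
  \<open>W = n + |E\<^sub>I\<^sub>I| + |E\<^sub>I\<^sub>L|/2\<close>. Hence \<open>C(x) \<ge> mu \<Lambda> - mu\<^sup>2 W\<close>, and \<open>mu = \<Lambda>/(2W)\<close> gives \<open>\<Lambda>\<^sup>2/(4W)\<close>.\<close>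

lemma card_2_Min_Max:
  fixes e :: "'a::linorder set"
  assumes "card e = 2"
  shows "Min e \<in> e" "Max e \<in> e" "Min e \<noteq> Max e" "e = {Min e, Max e}"
proof -
  obtain a b where "a \<noteq> b" "e = {a, b}"
    using assms by (meson card_2_iff)
  then show "Min e \<in> e" "Max e \<in> e" "Min e \<noteq> Max e" "e = {Min e, Max e}"
    by (auto simp: min_def max_def)
qed

lemma Min_le_Min_add:
  fixes X Y :: "real set"
  assumes "finite X" "finite Y" "Y \<noteq> {}" and "\<And>y. y \<in> Y \<Longrightarrow> \<exists>x\<in>X. x \<le> y + d"
  shows "Min X \<le> Min Y + d"
proof -
  obtain x where "x \<in> X" "x \<le> Min Y + d"
    using assms(2-4) Min_in by blast
  then show ?thesis
    using assms(1) Min_le[of X x] by linarith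
qed

lemma sum_card_filter_le_card:
  assumes "finite I" "finite P"
    and "\<And>i j p. i \<in> I \<Longrightarrow> j \<in> I \<Longrightarrow> p \<in> P \<Longrightarrow> R i p \<Longrightarrow> R j p \<Longrightarrow> i = j"
  shows "(\<Sum>i\<in>I. card {p\<in>P. R i p}) \<le> card P"
proof -
  have "(\<Sum>i\<in>I. card {p\<in>P. R i p}) = card (\<Union>i\<in>I. {p\<in>P. R i p})"
    using assms by (subst card_UN_disjoint) auto
  also have "\<dots> \<le> card P"
    using assms(2) by (intro card_mono) auto
  finally show ?thesis .
qed

definition trunc_dist :: "real \<Rightarrow> real set \<Rightarrow> real \<Rightarrow> real" where
  "trunc_dist mu A t = Min (insert mu ((\<lambda>a. \<bar>t - a\<bar>) ` A))"

lemma trunc_dist_le_add: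
  assumes "finite A"
  shows "trunc_dist mu A t \<le> trunc_dist mu A s + \<bar>t - s\<bar>"
  unfolding trunc_dist_def
proof (rule Min_le_Min_add)
  fix y assume "y \<in> insert mu ((\<lambda>a. \<bar>s - a\<bar>) ` A)"
  then consider "y = mu" | a where "a \<in> A" "y = \<bar>s - a\<bar>"
    by blast
  then show "\<exists>x\<in>insert mu ((\<lambda>a. \<bar>t - a\<bar>) ` A). x \<le> y + \<bar>t - s\<bar>"
  proof cases
    case 2
    then show ?thesis
      by (intro bexI[of _ "\<bar>t - a\<bar>"]) auto
  qed auto
qed (use assms in auto)

lemma trunc_dist_abs_diff_le:
  "finite A \<Longrightarrow> \<bar>trunc_dist mu A t - trunc_dist mu A s\<bar> \<le> \<bar>t - s\<bar>"
  using trunc_dist_le_add[of A mu t s] trunc_dist_le_add[of A mu s t] by linarith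

lemma trunc_dist_nonneg: "finite A \<Longrightarrow> 0 \<le> mu \<Longrightarrow> 0 \<le> trunc_dist mu A t"
  unfolding trunc_dist_def by (simp add: Min_ge_iff)

lemma trunc_dist_eq_0:
  assumes "finite A" "0 \<le> mu" "a \<in> A"
  shows "trunc_dist mu A a = 0"
proof -
  have "trunc_dist mu A a \<le> \<bar>a - a\<bar>"
    unfolding trunc_dist_def using assms by (intro Min_le) auto
  then show ?thesis
    using trunc_dist_nonneg[OF assms(1,2), of a] by simp
qed

lemma trunc_dist_ge_tents:
  assumes "finite A"
  shows "mu - (\<Sum>a\<in>A. max 0 (mu - \<bar>t - a\<bar>)) \<le> trunc_dist mu A t"
proof -
  have "trunc_dist mu A t \<in> insert mu ((\<lambda>a. \<bar>t - a\<bar>) ` A)"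
    unfolding trunc_dist_def using assms by (intro Min_in) auto
  moreover have "max 0 (mu - \<bar>t - a\<bar>) \<le> (\<Sum>a\<in>A. max 0 (mu - \<bar>t - a\<bar>))" if "a \<in> A" for a
    using assms that by (intro member_le_sum) auto
  moreover have "0 \<le> (\<Sum>a\<in>A. max 0 (mu - \<bar>t - a\<bar>))"
    by (simp add: sum_nonneg)
  ultimately show ?thesis
    by force
qed

lemma integral_half_tent_le:
  fixes x mu :: real
  assumes "0 \<le> x" "0 \<le> mu"
  shows "integral {0..x} (\<lambda>s. max 0 (mu - \<bar>s\<bar>)) \<le> mu\<^sup>2 / 2"
proof -
  let ?f = "\<lambda>s. max 0 (mu - \<bar>s\<bar>)"
  have linear: "integral {0..y} ?f = mu * y - y\<^sup>2 / 2" if "0 \<le> y" "y \<le> mu" for y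
  proof -
    have "integral {0..y} ?f = integral {0..y} (\<lambda>s. mu - s)"
      using that by (intro integral_cong) auto
    also have "\<dots> = mu * y - y\<^sup>2 / 2"
      using has_integral_diff[OF has_integral_const_real ident_has_integral[OF that(1)], of mu]
      by (simp add: that(1) integral_unique)
    finally show ?thesis .
  qed
  show ?thesis
  proof (cases "x \<le> mu")
    case True
    have "mu * x - x\<^sup>2 / 2 \<le> mu\<^sup>2 / 2"
      using sum_squares_ge_zero[of "mu - x" 0] by (simp add: power2_eq_square algebra_simps)
    then show ?thesis
      using linear[OF assms(1) True] by simp
  next
    case False
    have "?f integrable_on {0..x}"
      by (intro integrable_continuous_interval continuous_intros)
    then have "integral {0..x} ?f = integral {0..mu} ?f + integral {mu..x} ?f"
      using False assms by (simp add: Henstock_Kurzweil_Integration.integral_combine)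
    also have "integral {mu..x} ?f = 0"
      by (subst integral_cong[where g = "\<lambda>_. 0"]) auto
    finally show ?thesis
      using linear[OF assms(2) order_refl] by (simp add: power2_eq_square)
  qed
qed

lemma integral_tent_le:
  fixes a L mu :: real
  assumes "0 \<le> a" "a \<le> L" "0 \<le> mu"
  shows "integral {0..L} (\<lambda>t. max 0 (mu - \<bar>t - a\<bar>))
           \<le> (if a = 0 \<or> a = L then mu\<^sup>2 / 2 else mu\<^sup>2)"
proof -
  let ?f = "\<lambda>s. max 0 (mu - \<bar>s\<bar>)"
  have left: "integral {0..a} (\<lambda>t. ?f (t - a)) = integral {0..a} ?f"
  proof -
    have "integral {0..a} (\<lambda>t. ?f (t - a)) = integral {-a..0} ?f"
      using integral_shift_real_ivl[where a = "-a" and b = 0 and c = "-a" and f = ?f] by simp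
    also have "\<dots> = integral {-a..-0} (\<lambda>s. ?f (-s))"
      by simp
    also have "\<dots> = integral {0..a} ?f"
      by (rule Henstock_Kurzweil_Integration.integral_reflect_real)
    finally show ?thesis .
  qed
  have right: "integral {a..L} (\<lambda>t. ?f (t - a)) = integral {0..L - a} ?f"
    using integral_shift_real_ivl[where a = 0 and b = "L - a" and c = "-a" and f = ?f] by simp
  have "integral {0..L} (\<lambda>t. ?f (t - a)) = integral {0..a} ?f + integral {0..L - a} ?f"
  proof -
    have "(\<lambda>t. ?f (t - a)) integrable_on {0..L}"
      by (intro integrable_continuous_interval continuous_intros)
    from Henstock_Kurzweil_Integration.integral_combine[OF assms(1,2) this] show ?thesis
      using left right by simp
  qed
  moreover have "integral {0..a} ?f \<le> mu\<^sup>2 / 2" "integral {0..L - a} ?f \<le> mu\<^sup>2 / 2"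
    using integral_half_tent_le[of a mu] integral_half_tent_le[of "L - a" mu] assms by auto
  ultimately show ?thesis
    by auto
qed

lemma continuous_on_if_abs_diff_le:
  fixes f :: "real \<Rightarrow> real"
  assumes "\<And>s t. s \<in> S \<Longrightarrow> t \<in> S \<Longrightarrow> \<bar>f t - f s\<bar> \<le> \<bar>t - s\<bar>"
  shows "continuous_on S f"
proof (rule lipschitz_on_continuous_on)
  show "1-lipschitz_on S f"
    using assms by (intro lipschitz_onI) (auto simp: dist_real_def abs_minus_commute)
qed

definition weight :: "real \<Rightarrow> real set \<Rightarrow> real" where
  "weight L A = (\<Sum>a\<in>A. if a \<in> {0, L} then 1/2 else 1)"

lemma integral_trunc_dist_ge:
  assumes A: "finite A" "A \<subseteq> {0..L}" and "0 \<le> L" and mu: "0 \<le> mu"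
  shows "mu * L - mu\<^sup>2 * weight L A \<le> integral {0..L} (trunc_dist mu A)"
proof -
  let ?tent = "\<lambda>a t. max 0 (mu - \<bar>t - a\<bar>)"
  have tent_int: "?tent a integrable_on {0..L}" for a
    by (intro integrable_continuous_interval continuous_intros)
  have sum_int: "(\<lambda>t. \<Sum>a\<in>A. ?tent a t) integrable_on {0..L}"
    using integrable_sum[OF A(1) tent_int] .
  have "(\<Sum>a\<in>A. integral {0..L} (?tent a)) \<le> mu\<^sup>2 * weight L A"
    unfolding weight_def sum_distrib_left
  proof (rule sum_mono)
    fix a
    assume "a \<in> A"
    then have "0 \<le> a" "a \<le> L"
      using A(2) by auto
    then show "integral {0..L} (?tent a) \<le> mu\<^sup>2 * (if a \<in> {0, L} then 1/2 else 1)"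
      using integral_tent_le[OF _ _ mu, of a L] by auto
  qed
  then have "mu * L - mu\<^sup>2 * weight L A \<le> mu * L - (\<Sum>a\<in>A. integral {0..L} (?tent a))"
    by simp
  also have "\<dots> = integral {0..L} (\<lambda>t. mu - (\<Sum>a\<in>A. ?tent a t))"
    using integral_diff[OF integrable_const_ivl sum_int] integral_sum[OF A(1) tent_int] \<open>0 \<le> L\<close>
    by simp
  also have "\<dots> \<le> integral {0..L} (trunc_dist mu A)"
  proof (rule integral_le)
    show "(\<lambda>t. mu - (\<Sum>a\<in>A. ?tent a t)) integrable_on {0..L}"
      using integrable_diff[OF integrable_const_ivl sum_int] .
    show "trunc_dist mu A integrable_on {0..L}"
      using trunc_dist_abs_diff_le[OF A(1)]
      by (intro integrable_continuous_interval continuous_on_if_abs_diff_le)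
  qed (rule trunc_dist_ge_tents[OF A(1)])
  finally show ?thesis .
qed

locale metric_graph =
  fixes V :: "'v::linorder set" and E :: "'v set set" and lam :: "'v set \<Rightarrow> real"
  assumes network: "network V E lam"
begin

lemma finite_V: "finite V"
  using network by (simp add: network_def)

lemma E_nonempty: "E \<noteq> {}"
  using network by (simp add: network_def)

lemma edge_subset: "e \<in> E \<Longrightarrow> e \<subseteq> V"
  and card_edge: "e \<in> E \<Longrightarrow> card e = 2"
  and lam_pos: "e \<in> E \<Longrightarrow> 0 < lam e"
  using network by (simp_all add: network_def)

lemma degree_neq_2: "v \<in> V \<Longrightarrow> degree E v \<noteq> 2"
  using network by (simp add: network_def degree_def)

lemma finite_edge: "e \<in> E \<Longrightarrow> finite e"
  using card_edge card.infinite by fastforce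

lemma finite_E: "finite E"
  using finite_subset[of E "Pow V"] edge_subset finite_V by auto

lemma connected: "u \<in> V \<Longrightarrow> v \<in> V \<Longrightarrow> (\<lambda>a b. {a, b} \<in> E)\<^sup>*\<^sup>* u v"
  using network by (simp add: network_def)

lemma Min_edge: "e \<in> E \<Longrightarrow> Min e \<in> e"
  using card_2_Min_Max(1)[OF card_edge] .

lemma Max_edge: "e \<in> E \<Longrightarrow> Max e \<in> e"
  using card_2_Min_Max(2)[OF card_edge] .

lemma Min_neq_Max_edge: "e \<in> E \<Longrightarrow> Min e \<noteq> Max e"
  using card_2_Min_Max(3)[OF card_edge] .

lemma edge_eq_Min_Max: "e \<in> E \<Longrightarrow> e = {Min e, Max e}"
  using card_2_Min_Max(4)[OF card_edge] .

lemma endpoint_in_V_I_or_V_L: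
  assumes "e \<in> E" "v \<in> e"
  shows "v \<in> V_I V E \<or> v \<in> V_L V E"
proof -
  have "v \<in> V"
    using assms edge_subset by blast
  moreover have "{e\<in>E. v \<in> e} \<noteq> {}" "finite {e\<in>E. v \<in> e}"
    using assms finite_E by auto
  ultimately have "degree E v \<noteq> 0" "degree E v \<noteq> 2"
    using degree_neq_2 by (simp_all add: degree_def)
  then show ?thesis
    using \<open>v \<in> V\<close> unfolding V_I_def V_L_def by auto
qed

lemma leaf_edge_unique:
  assumes "degree E v = 1" "e \<in> E" "e' \<in> E" "v \<in> e" "v \<in> e'"
  shows "e = e'"
proof -
  obtain z where z: "{e\<in>E. v \<in> e} = {z}"
    using assms(1) unfolding degree_def by (meson card_1_singletonE)
  have "e \<in> {e\<in>E. v \<in> e}" "e' \<in> {e\<in>E. v \<in> e}"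
    using assms(2-) by simp_all
  then show ?thesis
    unfolding z by simp
qed

lemma pt_0: "pt lam e 0 = Vtx (Min e)"
  by (simp add: pt_def)

lemma pt_lam: "e \<in> E \<Longrightarrow> pt lam e (lam e) = Vtx (Max e)"
  using lam_pos[of e] by (simp add: pt_def)

lemma pt_Inner: "0 < u \<Longrightarrow> u < lam e \<Longrightarrow> pt lam e u = Inner e u"
  by (simp add: pt_def)

lemma inj_on_pt: "e \<in> E \<Longrightarrow> inj_on (pt lam e) {0..lam e}"
  using Min_neq_Max_edge[of e] lam_pos[of e] by (intro inj_onI) (auto simp: pt_def split: if_splits)

lemma vertex_eq_pt:
  assumes "e \<in> E" "v \<in> e"
  obtains u where "u \<in> {0, lam e}" "Vtx v = pt lam e u"
proof -
  have "v = Min e \<or> v = Max e"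
    using assms edge_eq_Min_Max by blast
  then show ?thesis
  proof
    assume "v = Min e"
    then show ?thesis
      using that[of 0] pt_0 by simp
  next
    assume "v = Max e"
    then show ?thesis
      using that[of "lam e"] pt_lam[OF assms(1)] by simp
  qed
qed

lemma vertex_in_edge:
  assumes "v \<in> V"
  obtains e where "e \<in> E" "v \<in> e"
proof -
  obtain e0 where "e0 \<in> E"
    using E_nonempty by blast
  with assms have "(\<lambda>a b. {a, b} \<in> E)\<^sup>*\<^sup>* v (Min e0)"
    using connected edge_subset Min_edge by blast
  then show ?thesis
    using that \<open>e0 \<in> E\<close> Min_edge by (cases rule: converse_rtranclpE) blast+
qed

lemma Spts_eq_pt:
  assumes "x \<in> Spts V E lam"
  obtains e u where "e \<in> E" "u \<in> {0..lam e}" "x = pt lam e u"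
proof (cases "x \<in> Vtx ` V")
  case True
  then obtain v where "v \<in> V" "x = Vtx v"
    by blast
  moreover obtain e where "e \<in> E" "v \<in> e"
    using vertex_in_edge[OF \<open>v \<in> V\<close>] .
  moreover obtain u where "u \<in> {0, lam e}" "Vtx v = pt lam e u"
    using vertex_eq_pt[OF \<open>e \<in> E\<close> \<open>v \<in> e\<close>] .
  ultimately show ?thesis
    using that[of e u] lam_pos[of e] by auto
next
  case False
  then obtain e u where "e \<in> E" "0 < u" "u < lam e" "x = Inner e u"
    using assms unfolding Spts_def by blast
  then show ?thesis
    using that[of e u] pt_Inner[of u e] by simp
qed

lemma path_len_Cons [simp]: "path_len ((e, s, t) # w) = \<bar>t - s\<bar> + path_len w"
  by (simp add: path_len_def)

lemma path_len_append_single: "path_len (w @ [(e, s, t)]) = path_len w + \<bar>t - s\<bar>"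
  by (simp add: path_len_def)

lemma path_len_nonneg: "0 \<le> path_len w"
  by (induction w) (auto simp: path_len_def)

lemma is_path_single:
  "e \<in> E \<Longrightarrow> s \<in> {0..lam e} \<Longrightarrow> t \<in> {0..lam e} \<Longrightarrow>
    is_path E lam (pt lam e s) (pt lam e t) [(e, s, t)]"
  by (simp add: is_path_def)

lemma is_path_snoc:
  assumes w: "is_path E lam x (pt lam e s) w"
    and "e \<in> E" "s \<in> {0..lam e}" "t \<in> {0..lam e}"
  shows "is_path E lam x (pt lam e t) (w @ [(e, s, t)])"
proof -
  have "w \<noteq> []"
    using w by (simp add: is_path_def)
  then have "w ! i = last w" if "Suc i = length w" for i
    using that last_conv_nth[of w] by (metis diff_Suc_1)
  then show ?thesis
    using w assms(2-) \<open>w \<noteq> []\<close> unfolding is_path_def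
    by (auto simp: hd_append nth_append less_Suc_eq)
qed

lemma is_path_ConsD:
  assumes "is_path E lam x y ((e, s, t) # w)" "w \<noteq> []"
  shows "is_path E lam (pt lam e t) y w" "x = pt lam e s" "e \<in> E"
    "s \<in> {0..lam e}" "t \<in> {0..lam e}"
proof -
  have glue: "pt lam (fst (((e, s, t) # w) ! i)) (snd (snd (((e, s, t) # w) ! i))) =
      pt lam (fst (((e, s, t) # w) ! Suc i)) (fst (snd (((e, s, t) # w) ! Suc i)))"
    if "Suc i < Suc (length w)" for i
    using assms(1) that unfolding is_path_def by auto
  show "is_path E lam (pt lam e t) y w"
    using assms glue[of 0] glue[of "Suc i" for i] unfolding is_path_def
    by (auto simp: hd_conv_nth)
  show "x = pt lam e s" "e \<in> E" "s \<in> {0..lam e}" "t \<in> {0..lam e}"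
    using assms(1) unfolding is_path_def by auto
qed

definition joinable :: "'v point \<Rightarrow> 'v point \<Rightarrow> bool" where
  "joinable x y \<longleftrightarrow> (\<exists>w. is_path E lam x y w)"

lemma joinable_along_edge:
  "joinable x (pt lam e s) \<Longrightarrow> e \<in> E \<Longrightarrow> s \<in> {0..lam e} \<Longrightarrow> t \<in> {0..lam e} \<Longrightarrow>
    joinable x (pt lam e t)"
  unfolding joinable_def using is_path_snoc by blast

lemma joinable_self: "x \<in> Spts V E lam \<Longrightarrow> joinable x x"
  unfolding joinable_def by (metis Spts_eq_pt is_path_single)

lemma joinable_vertices:
  assumes "(\<lambda>a b. {a, b} \<in> E)\<^sup>*\<^sup>* u v" "joinable x (Vtx u)"
  shows "joinable x (Vtx v)"
  using assms
proof (induction rule: rtranclp_induct)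
  case (step b c)
  let ?e = "{b, c}"
  obtain s where "s \<in> {0, lam ?e}" "Vtx b = pt lam ?e s"
    using vertex_eq_pt[OF \<open>?e \<in> E\<close>] by blast
  moreover obtain t where "t \<in> {0, lam ?e}" "Vtx c = pt lam ?e t"
    using vertex_eq_pt[OF \<open>?e \<in> E\<close>] by blast
  ultimately show ?case
    using step joinable_along_edge[of x ?e s t] lam_pos[of ?e] by auto
qed

lemma joinable_pt:
  assumes x: "x \<in> Spts V E lam" and e: "e \<in> E" "t \<in> {0..lam e}"
  shows "joinable x (pt lam e t)"
proof -
  obtain e' u where e': "e' \<in> E" "u \<in> {0..lam e'}" "x = pt lam e' u"
    using Spts_eq_pt[OF x] .
  then have "joinable x (Vtx (Min e'))"
    using joinable_self[OF x] joinable_along_edge[of x e' u 0] lam_pos pt_0 by auto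
  then have "joinable x (Vtx (Min e))"
    using joinable_vertices connected Min_edge edge_subset e' e by blast
  then show ?thesis
    using joinable_along_edge[of x e 0 t] e lam_pos pt_0 by auto
qed

definition lipschitz_along_edges :: "('v point \<Rightarrow> real) \<Rightarrow> bool" where
  "lipschitz_along_edges h \<longleftrightarrow>
    (\<forall>e\<in>E. \<forall>s\<in>{0..lam e}. \<forall>t\<in>{0..lam e}. \<bar>h (pt lam e t) - h (pt lam e s)\<bar> \<le> \<bar>t - s\<bar>)"

lemma abs_diff_le_path_len:
  assumes "lipschitz_along_edges h" "is_path E lam x y w"
  shows "\<bar>h y - h x\<bar> \<le> path_len w"
  using assms(2)
proof (induction w arbitrary: x)
  case (Cons seg w)
  obtain e s t where seg: "seg = (e, s, t)"
    by (cases seg) auto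
  show ?case
  proof (cases "w = []")
    case True
    then have "x = pt lam e s" "y = pt lam e t" "e \<in> E" "s \<in> {0..lam e}" "t \<in> {0..lam e}"
      using Cons.prems seg unfolding is_path_def by auto
    then show ?thesis
      using assms(1) True seg unfolding lipschitz_along_edges_def by (simp add: path_len_def)
  next
    case False
    note seg_props = is_path_ConsD[OF Cons.prems[unfolded seg] False]
    have "\<bar>h (pt lam e t) - h x\<bar> \<le> \<bar>t - s\<bar>"
      using assms(1) seg_props(2-) unfolding lipschitz_along_edges_def by blast
    then show ?thesis
      using Cons.IH[OF seg_props(1)] seg by simp
  qed
qed (simp add: is_path_def)

lemma abs_diff_le_dist_S:
  assumes "lipschitz_along_edges h" "joinable x y"
  shows "\<bar>h y - h x\<bar> \<le> dist_S E lam x y"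
  unfolding dist_S_def
  using assms abs_diff_le_path_len unfolding joinable_def by (intro cInf_greatest) auto

lemma dist_S_pt_le_add:
  assumes x: "x \<in> Spts V E lam" and e: "e \<in> E" and st: "s \<in> {0..lam e}" "t \<in> {0..lam e}"
  shows "dist_S E lam x (pt lam e t) \<le> dist_S E lam x (pt lam e s) + \<bar>t - s\<bar>"
proof -
  let ?L = "\<lambda>u. {path_len w |w. is_path E lam x (pt lam e u) w}"
  have "?L s \<noteq> {}"
    using joinable_pt[OF x e st(1)] unfolding joinable_def by auto
  moreover have "Inf (?L t) - \<bar>t - s\<bar> \<le> l" if l: "l \<in> ?L s" for l
  proof -
    obtain w where w: "l = path_len w" "is_path E lam x (pt lam e s) w"
      using l by blast
    have "is_path E lam x (pt lam e t) (w @ [(e, s, t)])"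
      using is_path_snoc[OF w(2) e st] .
    moreover have "path_len (w @ [(e, s, t)]) = l + \<bar>t - s\<bar>"
      using w(1) path_len_append_single by simp
    ultimately have "l + \<bar>t - s\<bar> \<in> ?L t"
      by (intro CollectI exI[of _ "w @ [(e, s, t)]"]) simp
    moreover have "bdd_below (?L t)"
      by (rule bdd_belowI[of _ 0]) (auto simp: path_len_nonneg)
    ultimately have "Inf (?L t) \<le> l + \<bar>t - s\<bar>"
      by (rule cInf_lower)
    then show ?thesis
      by simp
  qed
  ultimately have "Inf (?L t) - \<bar>t - s\<bar> \<le> Inf (?L s)"
    by (rule cInf_greatest)
  then show ?thesis
    unfolding dist_S_def by simp
qed

definition extend_by_zero :: "'v set \<Rightarrow> (real \<Rightarrow> real) \<Rightarrow> 'v point \<Rightarrow> real" where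
  "extend_by_zero e0 g p = (case p of
      Vtx v \<Rightarrow> if v = Min e0 then g 0 else if v = Max e0 then g (lam e0) else 0
    | Inner e u \<Rightarrow> if e = e0 then g u else 0)"

lemma extend_by_zero_pt:
  assumes "e0 \<in> E" "u \<in> {0..lam e0}"
  shows "extend_by_zero e0 g (pt lam e0 u) = g u"
  using assms Min_neq_Max_edge[of e0] by (auto simp: extend_by_zero_def pt_def)

lemma extend_by_zero_other_edge:
  assumes "e0 \<in> E" "e \<in> E" "e \<noteq> e0" "u \<in> {0..lam e}"
    and "degree E (Min e0) \<noteq> 1 \<Longrightarrow> g 0 = 0" "degree E (Max e0) \<noteq> 1 \<Longrightarrow> g (lam e0) = 0"
  shows "extend_by_zero e0 g (pt lam e u) = 0"
proof -
  have vertex: "extend_by_zero e0 g (Vtx v) = 0" if "v \<in> e" for v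
  proof -
    have "g 0 = 0" if "v = Min e0"
      using assms(5) leaf_edge_unique[of v e e0] \<open>v \<in> e\<close> that assms(1-3) Min_edge by blast
    moreover have "g (lam e0) = 0" if "v = Max e0"
      using assms(6) leaf_edge_unique[of v e e0] \<open>v \<in> e\<close> that assms(1-3) Max_edge by blast
    ultimately show ?thesis
      by (simp add: extend_by_zero_def)
  qed
  show ?thesis
    using vertex[OF Min_edge] vertex[OF Max_edge] assms(2,3)
    by (simp add: pt_def extend_by_zero_def)
qed

lemma lipschitz_along_edges_extend_by_zero:
  assumes "e0 \<in> E"
    and "\<And>s t. s \<in> {0..lam e0} \<Longrightarrow> t \<in> {0..lam e0} \<Longrightarrow> \<bar>g t - g s\<bar> \<le> \<bar>t - s\<bar>"
    and "degree E (Min e0) \<noteq> 1 \<Longrightarrow> g 0 = 0" "degree E (Max e0) \<noteq> 1 \<Longrightarrow> g (lam e0) = 0"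
  shows "lipschitz_along_edges (extend_by_zero e0 g)"
  unfolding lipschitz_along_edges_def
proof (intro ballI)
  fix e s t
  assume "e \<in> E" "s \<in> {0..lam e}" "t \<in> {0..lam e}"
  then show "\<bar>extend_by_zero e0 g (pt lam e t) - extend_by_zero e0 g (pt lam e s)\<bar> \<le> \<bar>t - s\<bar>"
    using assms extend_by_zero_pt extend_by_zero_other_edge
    by (cases "e = e0") simp_all
qed

definition anchors :: "nat \<Rightarrow> (nat \<Rightarrow> 'v point) \<Rightarrow> 'v set \<Rightarrow> real set" where
  "anchors n x e = {u \<in> {0..lam e}. \<exists>i<n. pt lam e u = x i}
     \<union> (if degree E (Min e) = 1 then {} else {0})
     \<union> (if degree E (Max e) = 1 then {} else {lam e})"

lemma anchors_subset: "e \<in> E \<Longrightarrow> anchors n x e \<subseteq> {0..lam e}"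
  using lam_pos[of e] by (auto simp: anchors_def)

lemma finite_anchors:
  assumes "e \<in> E"
  shows "finite (anchors n x e)"
proof -
  have "{u \<in> {0..lam e}. \<exists>i<n. pt lam e u = x i} \<subseteq> pt lam e -` (x ` {..<n}) \<inter> {0..lam e}"
    by blast
  moreover have "finite (pt lam e -` (x ` {..<n}) \<inter> {0..lam e})"
    using inj_on_pt[OF assms] by (intro finite_vimage_IntI) simp_all
  ultimately have "finite {u \<in> {0..lam e}. \<exists>i<n. pt lam e u = x i}"
    by (rule finite_subset)
  then show ?thesis
    unfolding anchors_def by simp
qed

lemma trunc_dist_anchors_le_dist_S:
  assumes e: "e \<in> E" and mu: "0 \<le> mu" and i: "i < n" "x i \<in> Spts V E lam"
    and t: "t \<in> {0..lam e}"
  shows "trunc_dist mu (anchors n x e) t \<le> dist_S E lam (x i) (pt lam e t)"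
proof -
  let ?g = "trunc_dist mu (anchors n x e)"
  let ?h = "extend_by_zero e ?g"
  have fin: "finite (anchors n x e)"
    using finite_anchors[OF e] .
  have anchor: "?g u = 0" if "u \<in> anchors n x e" for u
    using trunc_dist_eq_0[OF fin mu that] .
  have vanish: "degree E (Min e) \<noteq> 1 \<Longrightarrow> ?g 0 = 0" "degree E (Max e) \<noteq> 1 \<Longrightarrow> ?g (lam e) = 0"
    using anchor[of 0] anchor[of "lam e"] by (simp_all add: anchors_def)
  have lip: "lipschitz_along_edges ?h"
    using lipschitz_along_edges_extend_by_zero[OF e _ vanish] trunc_dist_abs_diff_le[OF fin] by blast
  obtain e' u where e': "e' \<in> E" "u \<in> {0..lam e'}" "x i = pt lam e' u"
    using Spts_eq_pt[OF i(2)] .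
  have "?h (x i) = 0"
  proof (cases "e' = e")
    case True
    then have "u \<in> anchors n x e"
      using e' i(1) unfolding anchors_def by auto
    then show ?thesis
      using True e' extend_by_zero_pt[OF e] anchor by simp
  next
    case False
    then show ?thesis
      using extend_by_zero_other_edge[OF e e'(1) False _ vanish] e' by simp
  qed
  then have "\<bar>?g t\<bar> \<le> dist_S E lam (x i) (pt lam e t)"
    using abs_diff_le_dist_S[OF lip joinable_pt[OF i(2) e t]] extend_by_zero_pt[OF e t] by simp
  then show ?thesis
    by simp
qed

definition nearest_dist :: "nat \<Rightarrow> (nat \<Rightarrow> 'v point) \<Rightarrow> 'v set \<Rightarrow> real \<Rightarrow> real" where
  "nearest_dist n x e t = Min ((\<lambda>i. dist_S E lam (x i) (pt lam e t)) ` {..<n})"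

lemma trunc_dist_anchors_le_nearest_dist:
  assumes "e \<in> E" "0 \<le> mu" "0 < n" "\<forall>i<n. x i \<in> Spts V E lam" "t \<in> {0..lam e}"
  shows "trunc_dist mu (anchors n x e) t \<le> nearest_dist n x e t"
  using assms trunc_dist_anchors_le_dist_S unfolding nearest_dist_def
  by (auto simp: Min_ge_iff lessThan_empty_iff)

lemma nearest_dist_le_add:
  assumes "e \<in> E" "0 < n" "\<forall>i<n. x i \<in> Spts V E lam" "s \<in> {0..lam e}" "t \<in> {0..lam e}"
  shows "nearest_dist n x e t \<le> nearest_dist n x e s + \<bar>t - s\<bar>"
  unfolding nearest_dist_def
proof (rule Min_le_Min_add)
  fix y
  assume "y \<in> (\<lambda>i. dist_S E lam (x i) (pt lam e s)) ` {..<n}"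
  then obtain i where "i < n" "y = dist_S E lam (x i) (pt lam e s)"
    by blast
  then show "\<exists>z\<in>(\<lambda>i. dist_S E lam (x i) (pt lam e t)) ` {..<n}. z \<le> y + \<bar>t - s\<bar>"
    using assms dist_S_pt_le_add[of "x i" e s t] by auto
qed (use assms in auto)

lemma continuous_on_nearest_dist:
  assumes "e \<in> E" "0 < n" "\<forall>i<n. x i \<in> Spts V E lam"
  shows "continuous_on {0..lam e} (nearest_dist n x e)"
proof (rule continuous_on_if_abs_diff_le)
  fix s t
  assume "s \<in> {0..lam e}" "t \<in> {0..lam e}"
  then show "\<bar>nearest_dist n x e t - nearest_dist n x e s\<bar> \<le> \<bar>t - s\<bar>"
    using nearest_dist_le_add[OF assms, of s t] nearest_dist_le_add[OF assms, of t s]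
    by (simp add: abs_le_iff abs_minus_commute)
qed

lemma integral_nearest_dist_ge:
  assumes e: "e \<in> E" and mu: "0 \<le> mu" and n: "0 < n" and x: "\<forall>i<n. x i \<in> Spts V E lam"
  shows "mu * lam e - mu\<^sup>2 * weight (lam e) (anchors n x e) \<le> integral {0..lam e} (nearest_dist n x e)"
proof -
  have "mu * lam e - mu\<^sup>2 * weight (lam e) (anchors n x e)
      \<le> integral {0..lam e} (trunc_dist mu (anchors n x e))"
    using finite_anchors[OF e] anchors_subset[OF e] lam_pos[OF e] mu
    by (intro integral_trunc_dist_ge) auto
  also have "\<dots> \<le> integral {0..lam e} (nearest_dist n x e)"
  proof (rule integral_le)
    show "trunc_dist mu (anchors n x e) integrable_on {0..lam e}"
      using trunc_dist_abs_diff_le[OF finite_anchors[OF e]]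
      by (intro integrable_continuous_interval continuous_on_if_abs_diff_le)
    show "nearest_dist n x e integrable_on {0..lam e}"
      using continuous_on_nearest_dist[OF e n x] by (rule integrable_continuous_interval)
  qed (rule trunc_dist_anchors_le_nearest_dist[OF e mu n x])
  finally show ?thesis .
qed

text \<open>Facilities at non-leaf vertices are left uncharged: the anchors they create are non-leaf
  endpoints, which are anchors anyway and are paid for by the term \<open>card (e \<inter> V_I V E) / 2\<close>.\<close>
definition charged :: "'v set \<Rightarrow> 'v point \<Rightarrow> bool" where
  "charged e p \<longleftrightarrow> (\<exists>u. 0 < u \<and> u < lam e \<and> p = Inner e u) \<or> (\<exists>v\<in>e. degree E v = 1 \<and> p = Vtx v)"

lemma charged_unique:
  assumes "e \<in> E" "e' \<in> E" "charged e p" "charged e' p"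
  shows "e = e'"
proof -
  consider (inner) u u' where "p = Inner e u" "p = Inner e' u'"
    | (leaf) v where "v \<in> e" "v \<in> e'" "degree E v = 1"
    using assms(3,4) unfolding charged_def by auto
  then show ?thesis
  proof cases
    case leaf
    show ?thesis
      using leaf_edge_unique[OF leaf(3) assms(1,2) leaf(1,2)] .
  qed simp
qed

lemma card_filter_pt_le:
  assumes "e \<in> E" "A \<subseteq> {0..lam e}" "finite B"
  shows "card {a \<in> A. pt lam e a \<in> B} \<le> card B"
proof (rule card_inj_on_le)
  have "{a \<in> A. pt lam e a \<in> B} \<subseteq> {0..lam e}"
    using assms(2) by blast
  then show "inj_on (pt lam e) {a \<in> A. pt lam e a \<in> B}"
    by (rule inj_on_subset[OF inj_on_pt[OF assms(1)]])
  show "pt lam e ` {a \<in> A. pt lam e a \<in> B} \<subseteq> B"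
    by blast
qed (rule assms(3))

lemma anchor_weight_le:
  assumes e: "e \<in> E" and a: "a \<in> anchors n x e"
  shows "(if a \<in> {0, lam e} then 1/2 else 1)
    \<le> of_bool (pt lam e a \<in> {p \<in> x ` {..<n}. charged e p})
      + of_bool (pt lam e a \<in> Vtx ` (e \<inter> V_I V E)) / (2::real)"
proof (cases "a \<in> {0, lam e}")
  case True
  then obtain v where v: "v \<in> e" "pt lam e a = Vtx v" "v = Min e \<or> v = Max e"
    using pt_0 pt_lam[OF e] Min_edge[OF e] Max_edge[OF e] by auto
  show ?thesis
  proof (cases "degree E v = 1")
    case True
    then have "pt lam e a \<in> {p \<in> x ` {..<n}. charged e p}"
      using a v lam_pos[OF e] Min_neq_Max_edge[OF e] pt_0[of e] pt_lam[OF e]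
      unfolding anchors_def charged_def by (auto split: if_splits)
    then show ?thesis
      by simp
  next
    case False
    then have "pt lam e a \<in> Vtx ` (e \<inter> V_I V E)"
      using endpoint_in_V_I_or_V_L[OF e v(1)] v(1,2) unfolding V_L_def by auto
    then show ?thesis
      using \<open>a \<in> {0, lam e}\<close> by simp
  qed
next
  case False
  then have "0 < a" "a < lam e"
    using a anchors_subset[OF e, of n x] by fastforce+
  then have "pt lam e a \<in> {p \<in> x ` {..<n}. charged e p}"
    using a False pt_Inner[of a e] unfolding anchors_def charged_def by (auto split: if_splits)
  then show ?thesis
    using False by simp
qed

lemma weight_anchors_le:
  assumes e: "e \<in> E"
  shows "weight (lam e) (anchors n x e)
    \<le> card {p \<in> x ` {..<n}. charged e p} + card (e \<inter> V_I V E) / 2"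
proof -
  let ?A = "anchors n x e"
  let ?C = "{p \<in> x ` {..<n}. charged e p}"
  let ?I = "Vtx ` (e \<inter> V_I V E)"
  have fin: "finite ?A"
    using finite_anchors[OF e] .
  have "weight (lam e) ?A \<le> (\<Sum>a\<in>?A. of_bool (pt lam e a \<in> ?C) + of_bool (pt lam e a \<in> ?I) / 2)"
    unfolding weight_def using anchor_weight_le[OF e] by (rule sum_mono)
  also have "\<dots> = card {a \<in> ?A. pt lam e a \<in> ?C} + card {a \<in> ?A. pt lam e a \<in> ?I} / 2"
    using fin by (simp add: sum.distrib sum_divide_distrib[symmetric] Collect_conj_eq Int_commute)
  also have "\<dots> \<le> card ?C + card ?I / 2"
  proof -
    have "card {a \<in> ?A. pt lam e a \<in> ?C} \<le> card ?C"
      by (rule card_filter_pt_le[OF e anchors_subset[OF e]]) simp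
    moreover have "card {a \<in> ?A. pt lam e a \<in> ?I} \<le> card ?I"
      by (rule card_filter_pt_le[OF e anchors_subset[OF e]]) (simp add: finite_edge[OF e])
    ultimately show ?thesis
      by linarith
  qed
  also have "card ?I = card (e \<inter> V_I V E)"
    by (rule card_image) (simp add: inj_on_def)
  finally show ?thesis .
qed

lemma card_edge_Int_V_I_le:
  assumes e: "e \<in> E"
  shows "card (e \<inter> V_I V E) / 2 \<le> of_bool (e \<in> E_II V E) + of_bool (e \<in> E_IL V E) / (2::real)"
proof (cases "e \<subseteq> V_I V E")
  case True
  then have "e \<in> E_II V E"
    using e unfolding E_II_def by blast
  moreover have "card (e \<inter> V_I V E) = 2"
    using True card_edge[OF e] by (simp add: Int_absorb2)
  ultimately show ?thesis
    by simp
next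
  case False
  then obtain w where w: "w \<in> e" "w \<notin> V_I V E"
    by blast
  then have "w \<in> V_L V E"
    using endpoint_in_V_I_or_V_L[OF e] by blast
  have "card (e \<inter> V_I V E) \<le> card (e - {w})"
    using finite_edge[OF e] by (intro card_mono) (auto simp: w)
  also have "\<dots> = 1"
    using card_edge[OF e] w by (simp add: card_Diff_singleton_if)
  finally have "card (e \<inter> V_I V E) \<le> 1" .
  moreover have "e \<in> E_IL V E" if "e \<inter> V_I V E \<noteq> {}"
    using that e w \<open>w \<in> V_L V E\<close> unfolding E_IL_def by blast
  ultimately show ?thesis
    by (cases "e \<inter> V_I V E = {}") auto
qed

lemma sum_weight_anchors_le:
  "(\<Sum>e\<in>E. weight (lam e) (anchors n x e)) \<le> n + card (E_II V E) + card (E_IL V E) / 2"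
proof -
  let ?C = "\<lambda>e. {p \<in> x ` {..<n}. charged e p}"
  have "(\<Sum>e\<in>E. weight (lam e) (anchors n x e))
      \<le> (\<Sum>e\<in>E. card (?C e) + (of_bool (e \<in> E_II V E) + of_bool (e \<in> E_IL V E) / 2))"
  proof (rule sum_mono)
    fix e
    assume "e \<in> E"
    then show "weight (lam e) (anchors n x e)
        \<le> card (?C e) + (of_bool (e \<in> E_II V E) + of_bool (e \<in> E_IL V E) / 2)"
      using weight_anchors_le[of e n x] card_edge_Int_V_I_le[of e] by linarith
  qed
  also have "\<dots> = (\<Sum>e\<in>E. card (?C e)) + card (E_II V E) + card (E_IL V E) / 2"
    using finite_E by (simp add: sum.distrib sum_divide_distrib[symmetric] E_II_def E_IL_def
        Collect_conj_eq Int_commute)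
  also have "(\<Sum>e\<in>E. card (?C e)) \<le> card (x ` {..<n})"
    using finite_E charged_unique by (intro sum_card_filter_le_card) auto
  also have "card (x ` {..<n}) \<le> n"
    using card_image_le[of "{..<n}" x] by simp
  finally show ?thesis
    by simp
qed

lemma social_cost_ge:
  assumes n: "0 < n" and x: "\<forall>i<n. x i \<in> Spts V E lam"
  shows "(total_length E lam)\<^sup>2 / (2 * (2 * real n + 2 * real (card (E_II V E)) + real (card (E_IL V E))))
    \<le> social_cost E lam n x"
proof -
  let ?\<Lambda> = "total_length E lam"
  define W where "W = n + card (E_II V E) + card (E_IL V E) / (2::real)"
  define mu where "mu = ?\<Lambda> / (2 * W)"
  have W: "1 \<le> W"
    using n unfolding W_def by simp
  have mu: "0 \<le> mu"
    using W lam_pos unfolding mu_def total_length_def by (simp add: sum_nonneg less_imp_le)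
  have "2 * (2 * real n + 2 * real (card (E_II V E)) + real (card (E_IL V E))) = 4 * W"
    unfolding W_def by simp
  then have "?\<Lambda>\<^sup>2 / (2 * (2 * real n + 2 * real (card (E_II V E)) + real (card (E_IL V E))))
      = mu * ?\<Lambda> - mu\<^sup>2 * W"
    using W unfolding mu_def by (simp add: power2_eq_square field_simps)
  also have "\<dots> \<le> mu * ?\<Lambda> - mu\<^sup>2 * (\<Sum>e\<in>E. weight (lam e) (anchors n x e))"
    using sum_weight_anchors_le[of n x] unfolding W_def by (simp add: mult_left_mono)
  also have "\<dots> = (\<Sum>e\<in>E. mu * lam e - mu\<^sup>2 * weight (lam e) (anchors n x e))"
    unfolding total_length_def by (simp add: sum_subtractf sum_distrib_left)
  also have "\<dots> \<le> (\<Sum>e\<in>E. integral {0..lam e} (nearest_dist n x e))"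
    using integral_nearest_dist_ge[OF _ mu n x] by (rule sum_mono)
  also have "\<dots> = social_cost E lam n x"
    unfolding social_cost_def integral_S_def nearest_dist_def ..
  finally show ?thesis .
qed

end

theorem mainTheorem15:
  fixes V :: "'v::linorder set" and E :: "'v set set" and lam :: "'v set \<Rightarrow> real" and n :: nat
  assumes "network V E lam" and "n \<ge> 1"
  shows "(total_length E lam)\<^sup>2 /
           (2 * (2 * real n + 2 * real (card (E_II V E)) + real (card (E_IL V E))))
         \<le> Inf (social_cost E lam n ` {x. \<forall>i<n. x i \<in> Spts V E lam})"
proof -
  interpret metric_graph V E lam
    using assms(1) by unfold_locales
  obtain e0 where e0: "e0 \<in> E"
    using E_nonempty by blast
  have "Vtx (Min e0) \<in> Spts V E lam"
    using Min_edge[OF e0] edge_subset[OF e0] unfolding Spts_def by blast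
  then have "(\<lambda>_. Vtx (Min e0)) \<in> {x. \<forall>i<n. x i \<in> Spts V E lam}"
    by simp
  then show ?thesis
    using social_cost_ge assms(2) by (intro cInf_greatest) auto
qed

end
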